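(* Let $s>3/2$. There is a constant $C>0$ such that for all $\sigma\in(1/2,1]$, all $\omega\in\{-1,1\}$, all integers $n\ge1$ and all $t\in\mathbb R$, the error $E=E^{\omega,n}(t)$ satisfies \[\|E(t)\|_{H^\sigma}\le\begin{cases}C\,n^{-2s+1+\sigma},& 3/2<s<2,\\ C\,n^{-s-1+\sigma},& s\ge2.\end{cases}\]
   Context: $\mathbb S=\mathbb R/(2\pi\mathbb Z)$. For $r\in\mathbb R$, $H^r(\mathbb S)$ is the Sobolev space with norm $\|u\|_{H^r}^2=\sum_{k\in\mathbb Z}(1+k^2)^r|\langle u,\phi_k\rangle|^2$, where $\phi_k(x)=e^{ikx}/\sqrt{2\pi}$, and $\Lambda^r=(1-\partial_x^2)^{r/2}$ is the Fourier multiplier with symbol $(1+k^2)^{r/2}$. For a function $u$ set $R(u):=7u_x^2-3u^4+2u^3-10u^2-2u$. For $s>3/2$, $\omega\in\{-1,1\}$ and integer $n\ge1$ define the approximate solution \[u^{\omega,n}(t,x):=\frac{\omega n^{-1}-1-n^{-s}\cos(nx+\omega t)}{14},\] and its error $E:=u^{\omega,n}_t-u^{\omega,n}_x-14u^{\omega,n}u^{\omega,n}_x-\partial_x\Lambda^{-2}R(u^{\omega,n})$. *)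

theory Defs
  imports "HOL-Analysis.Analysis"
begin

text \<open>Fourier basis on the circle S = R/(2 pi Z), functions represented as 2pi-periodic maps on R.\<close>
definition phi :: "int \<Rightarrow> real \<Rightarrow> complex" where
  "phi k x = exp (\<i> * of_int k * of_real x) / of_real (sqrt (2 * pi))"

definition fcoeff :: "(real \<Rightarrow> complex) \<Rightarrow> int \<Rightarrow> complex" where
  "fcoeff u k = integral {0..2*pi} (\<lambda>x. u x * cnj (phi k x))"

definition sobolev_norm :: "real \<Rightarrow> (real \<Rightarrow> complex) \<Rightarrow> real" where
  "sobolev_norm r u =
     sqrt (\<Sum>\<^sub>\<infinity>k\<in>(UNIV::int set). (1 + (real_of_int k)^2) powr r * (cmod (fcoeff u k))^2)"

definition fmult :: "(int \<Rightarrow> complex) \<Rightarrow> (real \<Rightarrow> complex) \<Rightarrow> real \<Rightarrow> complex" where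
  "fmult m u x = (\<Sum>\<^sub>\<infinity>k\<in>(UNIV::int set). m k * fcoeff u k * phi k x)"

definition dx_Lambda_m2 :: "(real \<Rightarrow> complex) \<Rightarrow> real \<Rightarrow> complex" where
  "dx_Lambda_m2 = fmult (\<lambda>k. \<i> * of_int k / of_real (1 + (real_of_int k)^2))"

definition uapp :: "real \<Rightarrow> real \<Rightarrow> nat \<Rightarrow> real \<Rightarrow> real \<Rightarrow> real" where
  "uapp s \<omega> n t x = (\<omega> / real n - 1 - real n powr (-s) * cos (real n * x + \<omega> * t)) / 14"

definition Rnl :: "(real \<Rightarrow> real) \<Rightarrow> real \<Rightarrow> real" where
  "Rnl u x = 7 * (deriv u x)^2 - 3 * (u x)^4 + 2 * (u x)^3 - 10 * (u x)^2 - 2 * u x"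

definition Err :: "real \<Rightarrow> real \<Rightarrow> nat \<Rightarrow> real \<Rightarrow> real \<Rightarrow> complex" where
  "Err s \<omega> n t x =
     of_real (deriv (\<lambda>\<tau>. uapp s \<omega> n \<tau> x) t
              - deriv (\<lambda>y. uapp s \<omega> n t y) x
              - 14 * uapp s \<omega> n t x * deriv (\<lambda>y. uapp s \<omega> n t y) x)
     - dx_Lambda_m2 (\<lambda>y. of_real (Rnl (\<lambda>z. uapp s \<omega> n t z) y)) x"

end

theory Submission
  imports Defs
begin

text \<open>
  Write \<open>\<theta> = n x + \<omega> t\<close> and \<open>b = n\<^sup>-\<^sup>s\<close>.  The shift \<open>\<omega>/n\<close> in the approximate solution is chosen
  so that all terms linear in \<open>b\<close> cancel in \<open>u\<^sub>t - u\<^sub>x - 14 u u\<^sub>x\<close>, which equals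
  \<open>b\<^sup>2 n sin \<theta> cos \<theta> / 14\<close>.  Both this residual and \<open>R(u)\<close> are trigonometric polynomials
  whose frequencies are multiples of \<open>n\<close> of size at most \<open>4n\<close>; on such functions the
  \<open>H\<^sup>\<sigma>\<close> weight is \<open>O(n\<^sup>2\<^sup>\<sigma>)\<close>, while the symbol \<open>ik/(1+k\<^sup>2)\<close> of \<open>\<partial>\<^sub>x\<Lambda>\<^sup>-\<^sup>2\<close> vanishes at \<open>k = 0\<close>
  and is at most \<open>1/n\<close> elsewhere.  By Parseval, the residual contributes
  \<open>n\<^sup>\<sigma> b\<^sup>2 n\<close>, and \<open>R(u)\<close>, whose deviation from a constant is \<open>O(b\<^sup>2 n\<^sup>2 + b)\<close>, contributes
  \<open>n\<^sup>\<sigma> (b\<^sup>2 n + b/n)\<close>.  Which of \<open>n\<^sup>1\<^sup>-\<^sup>2\<^sup>s\<close> and \<open>n\<^sup>-\<^sup>s\<^sup>-\<^sup>1\<close> dominates depends on whether \<open>s < 2\<close>.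
\<close>

lemma sqrt_2pi_squared:
  "complex_of_real (sqrt (2*pi)) * complex_of_real (sqrt (2*pi)) = complex_of_real (2*pi)"
  by (simp only: of_real_mult[symmetric]) (use pi_gt_zero in simp)

lemma sqrt_2pi_nonzero: "complex_of_real (sqrt (2*pi)) \<noteq> 0"
  using pi_gt_zero by simp

lemma phi_zero: "phi 0 x = 1 / complex_of_real (sqrt (2*pi))"
  unfolding phi_def by simp

lemma phi_mult: "phi k x * phi l x = phi (k + l) x / complex_of_real (sqrt (2*pi))"
proof -
  have "\<i> * of_int k * of_real x + \<i> * of_int l * of_real x = \<i> * of_int (k + l) * (of_real x :: complex)"
    by (simp add: algebra_simps)
  then have "exp (\<i> * of_int k * of_real x) * exp (\<i> * of_int l * of_real x)
      = exp (\<i> * of_int (k + l) * (of_real x :: complex))"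
    by (simp only: exp_add[symmetric])
  then show ?thesis unfolding phi_def by (simp only: times_divide_times_eq divide_divide_eq_left)
qed

lemma phi_mult_cnj:
  "phi k x * cnj (phi j x) = exp (\<i> * of_int (k - j) * of_real x) / complex_of_real (2 * pi)"
proof -
  have "\<i> * of_int k * of_real x + - (\<i> * of_int j * of_real x) = \<i> * of_int (k - j) * (of_real x :: complex)"
    by (simp add: algebra_simps)
  then have "exp (\<i> * of_int k * of_real x) * exp (- (\<i> * of_int j * of_real x))
      = exp (\<i> * of_int (k - j) * of_real x)"
    by (simp only: exp_add[symmetric])
  then show ?thesis
    unfolding phi_def complex_cnj_divide complex_cnj_complex_of_real exp_cnj
    by (simp add: times_divide_times_eq sqrt_2pi_squared)
qed

lemma integral_exp_period:
  "integral {0..2*pi} (\<lambda>x. exp (\<i> * of_int m * of_real x)) = (if m = 0 then complex_of_real (2 * pi) else 0)"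
proof (cases "m = 0")
  case True
  then show ?thesis by (simp add: scaleR_conv_of_real)
next
  case False
  have "exp ((\<i> * of_int m) * of_real (2*pi)) = (1::complex)"
    using exp_2pi_1_int[of m] by (simp add: algebra_simps)
  moreover have "integral {0..2*pi} (\<lambda>x. exp ((\<i> * of_int m) * complex_of_real x))
      = (exp ((\<i> * of_int m) * of_real (2*pi)) - 1) / (\<i> * of_int m)"
    by (rule Kronecker_Approximation_Theorem.integral_exp) (use False in auto)
  ultimately show ?thesis using False by simp
qed

lemma phi_orthonormal: "integral {0..2*pi} (\<lambda>x. phi k x * cnj (phi j x)) = (if k = j then 1 else 0)"
  unfolding phi_mult_cnj integral_divide integral_exp_period using pi_gt_zero by auto

lemma continuous_on_phi [continuous_intros]: "continuous_on A (phi k)"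
  unfolding phi_def using sqrt_2pi_nonzero by (intro continuous_intros) auto

lemma fcoeff_trigpoly:
  assumes "finite K"
  shows "fcoeff (\<lambda>x. \<Sum>k\<in>K. c k * phi k x) j = (if j \<in> K then c j else 0)"
proof -
  have "fcoeff (\<lambda>x. \<Sum>k\<in>K. c k * phi k x) j
      = integral {0..2*pi} (\<lambda>x. \<Sum>k\<in>K. c k * (phi k x * cnj (phi j x)))"
    unfolding fcoeff_def by (simp add: sum_distrib_right mult.assoc)
  also have "\<dots> = (\<Sum>k\<in>K. c k * integral {0..2*pi} (\<lambda>x. phi k x * cnj (phi j x)))"
    by (subst integral_sum[OF assms])
       (auto intro!: integrable_continuous_interval continuous_intros)
  also have "\<dots> = (if j \<in> K then c j else 0)"
    using assms by (simp add: phi_orthonormal if_distrib sum.delta' cong: if_cong)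
  finally show ?thesis .
qed

lemma fmult_trigpoly:
  assumes "finite K"
  shows "fmult m (\<lambda>x. \<Sum>k\<in>K. c k * phi k x) x = (\<Sum>k\<in>K. m k * c k * phi k x)"
proof -
  have "fmult m (\<lambda>x. \<Sum>k\<in>K. c k * phi k x) x = infsum (\<lambda>k. m k * c k * phi k x) K"
    unfolding fmult_def by (rule infsum_cong_neutral) (auto simp: fcoeff_trigpoly[OF assms])
  then show ?thesis using assms by simp
qed

lemma sobolev_norm_trigpoly:
  assumes "finite K"
  shows "sobolev_norm \<sigma> (\<lambda>x. \<Sum>k\<in>K. c k * phi k x)
           = sqrt (\<Sum>k\<in>K. (1 + (real_of_int k)^2) powr \<sigma> * (cmod (c k))^2)"
proof -
  have "infsum (\<lambda>k. (1 + (real_of_int k)^2) powr \<sigma> * (cmod (fcoeff (\<lambda>x. \<Sum>k\<in>K. c k * phi k x) k))^2) UNIV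
      = infsum (\<lambda>k. (1 + (real_of_int k)^2) powr \<sigma> * (cmod (c k))^2) K"
    by (rule infsum_cong_neutral) (auto simp: fcoeff_trigpoly[OF assms])
  then show ?thesis unfolding sobolev_norm_def using assms by simp
qed

lemma parseval_trigpoly_le:
  assumes K: "finite K" and M: "\<And>x. x \<in> {0..2*pi} \<Longrightarrow> cmod (\<Sum>k\<in>K. c k * phi k x) \<le> M"
  shows "(\<Sum>k\<in>K. (cmod (c k))^2) \<le> 2 * pi * M^2"
proof -
  define f where "f = (\<lambda>x. \<Sum>k\<in>K. c k * phi k x)"
  have "integral {0..2*pi} (\<lambda>x. f x * cnj (f x))
      = integral {0..2*pi} (\<lambda>x. \<Sum>j\<in>K. cnj (c j) * (f x * cnj (phi j x)))"
    unfolding f_def by (simp add: sum_distrib_left cnj_sum mult.commute mult.left_commute)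
  also have "\<dots> = (\<Sum>j\<in>K. cnj (c j) * fcoeff f j)"
    unfolding fcoeff_def f_def
    by (subst integral_sum[OF K]) (auto intro!: integrable_continuous_interval continuous_intros)
  also have "\<dots> = of_real (\<Sum>j\<in>K. (cmod (c j))^2)"
    unfolding f_def fcoeff_trigpoly[OF K] of_real_sum
    by (intro sum.cong refl) (simp add: complex_norm_square[symmetric] mult.commute)
  finally have eq: "integral {0..2*pi} (\<lambda>x. f x * cnj (f x)) = of_real (\<Sum>j\<in>K. (cmod (c j))^2)" .
  have "norm (integral {0..2*pi} (\<lambda>x. f x * cnj (f x))) \<le> M^2 * (2*pi - 0)"
  proof (rule integral_bound)
    show "continuous_on {0..2*pi} (\<lambda>x. f x * cnj (f x))"
      unfolding f_def by (intro continuous_intros)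
    fix x assume x: "x \<in> {0..2*pi}"
    have "norm (f x * cnj (f x)) = (cmod (f x))^2" by (simp add: norm_mult power2_eq_square)
    also have "\<dots> \<le> M^2" using M[OF x] unfolding f_def by (intro power_mono) auto
    finally show "norm (f x * cnj (f x)) \<le> M^2" .
  qed (use pi_gt_zero in simp)
  then show ?thesis unfolding eq norm_of_real by (simp add: sum_nonneg mult.commute)
qed

definition harmonics :: "nat \<Rightarrow> nat \<Rightarrow> int set" where
  "harmonics n d = {k. int n dvd k \<and> \<bar>k\<bar> \<le> int d * int n}"

definition harmonic_poly :: "nat \<Rightarrow> nat \<Rightarrow> (real \<Rightarrow> complex) \<Rightarrow> bool" where
  "harmonic_poly n d f \<longleftrightarrow> (\<exists>c. f = (\<lambda>x. \<Sum>k\<in>harmonics n d. c k * phi k x))"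

lemma finite_harmonics [simp]: "finite (harmonics n d)"
  by (rule finite_subset[of _ "{-(int d * int n)..int d * int n}"]) (auto simp: harmonics_def)

lemma zero_in_harmonics [simp]: "0 \<in> harmonics n d"
  unfolding harmonics_def by simp

lemma harmonics_mono: "d \<le> e \<Longrightarrow> harmonics n d \<subseteq> harmonics n e"
  unfolding harmonics_def using mult_right_mono[of "int d" "int e" "int n"] by (auto intro: order_trans)

lemma harmonics_add: "k \<in> harmonics n d \<Longrightarrow> l \<in> harmonics n e \<Longrightarrow> k + l \<in> harmonics n (d + e)"
  unfolding harmonics_def by (auto simp: algebra_simps intro: order_trans[OF abs_triangle_ineq])

lemma harmonic_polyI: "f = (\<lambda>x. \<Sum>k\<in>harmonics n d. c k * phi k x) \<Longrightarrow> harmonic_poly n d f"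
  unfolding harmonic_poly_def by blast

lemma harmonic_poly_sum:
  assumes I: "finite I" and h: "h ` I \<subseteq> harmonics n d"
  shows "harmonic_poly n d (\<lambda>x. \<Sum>i\<in>I. a i * phi (h i) x)"
proof (rule harmonic_polyI, rule ext)
  fix x
  define c where "c k = (\<Sum>i\<in>{i \<in> I. h i = k}. a i)" for k
  have "(\<Sum>i\<in>I. a i * phi (h i) x) = (\<Sum>k\<in>h ` I. c k * phi k x)"
    unfolding sum.image_gen[OF I, of "\<lambda>i. a i * phi (h i) x" h] c_def sum_distrib_right
    by (intro sum.cong refl) auto
  also have "\<dots> = (\<Sum>k\<in>harmonics n d \<inter> h ` I. c k * phi k x)"
    using h by (simp add: Int_absorb1)
  also have "\<dots> = (\<Sum>k\<in>harmonics n d. (if k \<in> h ` I then c k else 0) * phi k x)"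
    by (simp add: sum.inter_restrict if_distrib[of "\<lambda>z. z * phi _ x"] cong: if_cong)
  finally show "(\<Sum>i\<in>I. a i * phi (h i) x)
      = (\<Sum>k\<in>harmonics n d. (if k \<in> h ` I then c k else 0) * phi k x)" .
qed

lemma harmonic_poly_mono:
  assumes "d \<le> e" "harmonic_poly n d f"
  shows "harmonic_poly n e f"
  using assms harmonic_poly_sum[of "harmonics n d" "\<lambda>k. k" n e] harmonics_mono[of d e n]
  unfolding harmonic_poly_def by auto

lemma harmonic_poly_add:
  assumes "harmonic_poly n d f" "harmonic_poly n d g"
  shows "harmonic_poly n d (\<lambda>x. f x + g x)"
proof -
  from assms obtain c c' where "f = (\<lambda>x. \<Sum>k\<in>harmonics n d. c k * phi k x)"
    and "g = (\<lambda>x. \<Sum>k\<in>harmonics n d. c' k * phi k x)"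
    unfolding harmonic_poly_def by blast
  then have "(\<lambda>x. f x + g x) = (\<lambda>x. \<Sum>k\<in>harmonics n d. (c k + c' k) * phi k x)"
    by (simp add: distrib_right sum.distrib)
  then show ?thesis by (rule harmonic_polyI)
qed

lemma harmonic_poly_scale:
  assumes "harmonic_poly n d f"
  shows "harmonic_poly n d (\<lambda>x. a * f x)"
proof -
  from assms obtain c where "f = (\<lambda>x. \<Sum>k\<in>harmonics n d. c k * phi k x)"
    unfolding harmonic_poly_def by blast
  then have "(\<lambda>x. a * f x) = (\<lambda>x. \<Sum>k\<in>harmonics n d. (a * c k) * phi k x)"
    by (simp add: sum_distrib_left mult.assoc)
  then show ?thesis by (rule harmonic_polyI)
qed

lemma harmonic_poly_diff:
  "harmonic_poly n d f \<Longrightarrow> harmonic_poly n d g \<Longrightarrow> harmonic_poly n d (\<lambda>x. f x - g x)"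
  using harmonic_poly_add[of n d f "\<lambda>x. -1 * g x"] harmonic_poly_scale[of n d g "-1"] by simp

lemma harmonic_poly_phi: "k \<in> harmonics n d \<Longrightarrow> harmonic_poly n d (\<lambda>x. a * phi k x)"
  using harmonic_poly_sum[of "{k}" "\<lambda>i. i" n d "\<lambda>_. a"] by simp

lemma harmonic_poly_const: "harmonic_poly n d (\<lambda>x. a)"
  using harmonic_poly_phi[OF zero_in_harmonics, of n d "a * complex_of_real (sqrt (2*pi))"]
  by (simp add: phi_zero sqrt_2pi_nonzero)

lemma harmonic_poly_mult:
  assumes "harmonic_poly n d f" "harmonic_poly n e g"
  shows "harmonic_poly n (d + e) (\<lambda>x. f x * g x)"
proof -
  from assms obtain c c' where f: "f = (\<lambda>x. \<Sum>k\<in>harmonics n d. c k * phi k x)"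
    and g: "g = (\<lambda>x. \<Sum>k\<in>harmonics n e. c' k * phi k x)"
    unfolding harmonic_poly_def by blast
  define a where "a p = c (fst p) * c' (snd p) / complex_of_real (sqrt (2*pi))" for p
  have "f x * g x = (\<Sum>p\<in>harmonics n d \<times> harmonics n e. a p * phi (fst p + snd p) x)" for x
    unfolding f g sum_product sum.cartesian_product a_def
    by (intro sum.cong refl) (auto simp: phi_mult field_simps)
  moreover have "harmonic_poly n (d + e)
      (\<lambda>x. \<Sum>p\<in>harmonics n d \<times> harmonics n e. a p * phi (fst p + snd p) x)"
    by (rule harmonic_poly_sum) (auto intro: harmonics_add)
  ultimately show ?thesis by simp
qed

lemma harmonic_poly_power: "harmonic_poly n d f \<Longrightarrow> harmonic_poly n (m * d) (\<lambda>x. f x ^ m)"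
proof (induction m)
  case 0
  then show ?case using harmonic_poly_const[of n 0 1] by simp
next
  case (Suc m)
  then show ?case using harmonic_poly_mult[OF Suc.prems Suc.IH[OF Suc.prems]] by simp
qed

lemma exp_linear_phase:
  "exp (\<i> * complex_of_real (real_of_int k * y + c))
     = exp (\<i> * of_real c) * complex_of_real (sqrt (2*pi)) * phi k y"
proof -
  have "\<i> * complex_of_real (real_of_int k * y + c) = \<i> * of_real c + \<i> * of_int k * of_real y"
    by (simp add: algebra_simps)
  then show ?thesis unfolding phi_def using sqrt_2pi_nonzero by (simp add: exp_add)
qed

lemma harmonic_poly_cos: "harmonic_poly n 1 (\<lambda>y. complex_of_real (cos (real n * y + c)))"
proof -
  define A where "A = exp (\<i> * of_real c) * complex_of_real (sqrt (2*pi)) / 2"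
  define B where "B = exp (\<i> * of_real (- c)) * complex_of_real (sqrt (2*pi)) / 2"
  have pm: "int n \<in> harmonics n 1" "- int n \<in> harmonics n 1"
    unfolding harmonics_def by auto
  have "complex_of_real (cos (real n * y + c))
      = (exp (\<i> * complex_of_real (real_of_int (int n) * y + c))
         + exp (\<i> * complex_of_real (real_of_int (- int n) * y + - c))) / 2" for y
    by (simp only: cos_of_real[symmetric] cos_exp_eq) (simp add: algebra_simps)
  then have cos_eq: "(\<lambda>y. complex_of_real (cos (real n * y + c)))
      = (\<lambda>y. A * phi (int n) y + B * phi (- int n) y)"
    unfolding exp_linear_phase A_def B_def by (auto simp: field_simps)
  then show ?thesis unfolding cos_eq by (intro harmonic_poly_add harmonic_poly_phi pm)
qed

lemma harmonic_poly_sin: "harmonic_poly n 1 (\<lambda>y. complex_of_real (sin (real n * y + c)))"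
proof -
  have "sin (real n * y + c) = cos (real n * y + (c - pi / 2))" for y
    using sin_cos_eq[of "real n * y + c"] cos_minus[of "real n * y + (c - pi/2)"]
    by (simp add: algebra_simps)
  then show ?thesis using harmonic_poly_cos[of n "c - pi / 2"] by simp
qed

lemma harmonic_weight_le:
  assumes k: "k \<in> harmonics n d" and n: "n \<ge> 1" and \<sigma>: "0 \<le> \<sigma>" "\<sigma> \<le> 1"
  shows "(1 + (real_of_int k)^2) powr \<sigma> \<le> (1 + (real d)^2) * (real n powr \<sigma>)^2"
proof -
  have "\<bar>real_of_int k\<bar> \<le> real d * real n"
    using k unfolding harmonics_def by (simp flip: of_int_abs) (metis of_int_le_iff of_int_mult of_int_of_nat_eq)
  then have "(real_of_int k)^2 \<le> (real d)^2 * (real n)^2"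
    by (metis abs_ge_zero power2_abs power_mono power_mult_distrib)
  moreover have "1 \<le> (real n)^2" using n by simp
  ultimately have "1 + (real_of_int k)^2 \<le> (1 + (real d)^2) * (real n)^2"
    by (simp add: algebra_simps)
  then have "(1 + (real_of_int k)^2) powr \<sigma> \<le> ((1 + (real d)^2) * (real n)^2) powr \<sigma>"
    using \<sigma> by (intro powr_mono2) auto
  also have "\<dots> = (1 + (real d)^2) powr \<sigma> * (real n powr \<sigma>)^2"
    by (simp add: powr_mult power2_eq_square)
  also have "(1 + (real d)^2) powr \<sigma> \<le> (1 + (real d)^2) powr 1"
    using \<sigma> by (intro powr_mono) auto
  finally show ?thesis by (simp add: mult_right_mono)
qed

lemma dx_Lambda_m2_symbol_le:
  assumes "int n dvd k" "n \<ge> 1"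
  shows "cmod (\<i> * of_int k / complex_of_real (1 + (real_of_int k)^2)) \<le> 1 / real n"
proof (cases "k = 0")
  case True
  then show ?thesis by simp
next
  case False
  then have k: "0 < \<bar>real_of_int k\<bar>" by simp
  have "cmod (\<i> * of_int k / complex_of_real (1 + (real_of_int k)^2))
      = \<bar>real_of_int k\<bar> / (1 + (real_of_int k)^2)"
    by (simp only: norm_divide norm_mult norm_of_real norm_ii norm_of_int) simp
  also have "\<dots> \<le> \<bar>real_of_int k\<bar> / (real_of_int k)^2"
    using k by (intro divide_left_mono) (auto intro!: mult_pos_pos add_pos_nonneg)
  also have "\<dots> = 1 / \<bar>real_of_int k\<bar>"
    using k by (simp add: power2_eq_square field_simps)
  also have "\<dots> \<le> 1 / real n"
    using dvd_imp_le_int[OF False assms(1)] assms(2) by (intro divide_left_mono) auto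
  finally show ?thesis .
qed

text \<open>The symbol of \<open>\<partial>\<^sub>x\<Lambda>\<^sup>-\<^sup>2\<close> vanishes at frequency \<open>0\<close>.\<close>

lemma dx_Lambda_m2_add_const:
  assumes "harmonic_poly n d g"
  shows "dx_Lambda_m2 (\<lambda>x. g x + a) = dx_Lambda_m2 g"
proof -
  obtain c where c: "g = (\<lambda>x. \<Sum>k\<in>harmonics n d. c k * phi k x)"
    using assms unfolding harmonic_poly_def by blast
  define c' where "c' k = c k + (if k = 0 then a * complex_of_real (sqrt (2*pi)) else 0)" for k
  have g_plus: "(\<lambda>x. g x + a) = (\<lambda>x. \<Sum>k\<in>harmonics n d. c' k * phi k x)"
    unfolding c c'_def distrib_right sum.distrib
    by (simp add: if_distrib[of "\<lambda>z. z * phi _ _"] phi_zero sqrt_2pi_nonzero cong: if_cong)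
  show ?thesis
  proof
    fix x
    show "dx_Lambda_m2 (\<lambda>x. g x + a) x = dx_Lambda_m2 g x"
      unfolding g_plus unfolding c dx_Lambda_m2_def fmult_trigpoly[OF finite_harmonics]
      by (intro sum.cong) (auto simp: c'_def)
  qed
qed

lemma norm_diff_squared_le: "(norm (x - y))^2 \<le> 2 * (norm x)^2 + 2 * (norm y)^2"
proof -
  have "(norm (x - y))^2 \<le> (norm x + norm y)^2"
    by (intro power_mono norm_triangle_ineq4) simp
  also have "\<dots> \<le> 2 * (norm x)^2 + 2 * (norm y)^2"
    using sum_squares_ge_zero[of "norm x - norm y" 0] by (simp add: power2_eq_square algebra_simps)
  finally show ?thesis .
qed

lemma sum_weighted_norm_diff_le:
  fixes a b m :: "'i \<Rightarrow> 'a::real_normed_div_algebra"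
  assumes w: "\<And>k. k \<in> K \<Longrightarrow> w k \<le> W" and W: "0 \<le> W"
    and m: "\<And>k. k \<in> K \<Longrightarrow> norm (m k) \<le> \<mu>"
  shows "(\<Sum>k\<in>K. w k * (norm (a k - m k * b k))^2)
           \<le> 2 * W * ((\<Sum>k\<in>K. (norm (a k))^2) + \<mu>^2 * (\<Sum>k\<in>K. (norm (b k))^2))"
proof -
  have "w k * (norm (a k - m k * b k))^2 \<le> W * (2 * (norm (a k))^2 + 2 * \<mu>^2 * (norm (b k))^2)"
    if k: "k \<in> K" for k
  proof -
    have "(norm (m k))^2 \<le> \<mu>^2"
      using m[OF k] by (intro power_mono) auto
    then have "(norm (m k * b k))^2 \<le> \<mu>^2 * (norm (b k))^2"
      by (simp add: norm_mult power_mult_distrib mult_right_mono)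
    then have "(norm (a k - m k * b k))^2 \<le> 2 * (norm (a k))^2 + 2 * \<mu>^2 * (norm (b k))^2"
      using norm_diff_squared_le[of "a k" "m k * b k"] by linarith
    then show ?thesis
      using w[OF k] W by (intro mult_mono) auto
  qed
  then have "(\<Sum>k\<in>K. w k * (norm (a k - m k * b k))^2)
      \<le> (\<Sum>k\<in>K. W * (2 * (norm (a k))^2 + 2 * \<mu>^2 * (norm (b k))^2))"
    by (rule sum_mono)
  also have "\<dots> = 2 * W * ((\<Sum>k\<in>K. (norm (a k))^2) + \<mu>^2 * (\<Sum>k\<in>K. (norm (b k))^2))"
    by (simp add: sum_distrib_left sum.distrib algebra_simps)
  finally show ?thesis .
qed

lemma sobolev_norm_diff_dx_Lambda_m2_le:
  assumes n: "n \<ge> 1" and \<sigma>: "0 \<le> \<sigma>" "\<sigma> \<le> 1"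
    and f: "harmonic_poly n d f" and g: "harmonic_poly n d g"
    and f_le: "\<And>x. cmod (f x) \<le> F" and g_le: "\<And>x. cmod (g x - a) \<le> G"
  shows "sobolev_norm \<sigma> (\<lambda>x. f x - dx_Lambda_m2 g x)
           \<le> sqrt (4 * pi * (1 + (real d)^2)) * real n powr \<sigma> * (F + G / real n)"
proof -
  let ?H = "harmonics n d"
  define m where "m k = \<i> * of_int k / complex_of_real (1 + (real_of_int k)^2)" for k
  define W where "W = (1 + (real d)^2) * (real n powr \<sigma>)^2"
  have g': "harmonic_poly n d (\<lambda>x. g x - a)"
    by (intro harmonic_poly_diff g harmonic_poly_const)
  obtain cf where cf: "f = (\<lambda>x. \<Sum>k\<in>?H. cf k * phi k x)"
    using f unfolding harmonic_poly_def by blast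
  obtain cg where cg: "(\<lambda>x. g x - a) = (\<lambda>x. \<Sum>k\<in>?H. cg k * phi k x)"
    using g' unfolding harmonic_poly_def by blast
  have "dx_Lambda_m2 g x = (\<Sum>k\<in>?H. m k * cg k * phi k x)" for x
  proof -
    have "dx_Lambda_m2 g x = dx_Lambda_m2 (\<lambda>x. g x - a) x"
      using dx_Lambda_m2_add_const[OF g', of a] by simp
    also have "\<dots> = (\<Sum>k\<in>?H. m k * cg k * phi k x)"
      unfolding cg dx_Lambda_m2_def m_def by (rule fmult_trigpoly[OF finite_harmonics])
    finally show ?thesis .
  qed
  then have "(\<lambda>x. f x - dx_Lambda_m2 g x) = (\<lambda>x. \<Sum>k\<in>?H. (cf k - m k * cg k) * phi k x)"
    unfolding cf by (simp add: sum_subtractf left_diff_distrib)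
  then have norm_eq: "sobolev_norm \<sigma> (\<lambda>x. f x - dx_Lambda_m2 g x)
      = sqrt (\<Sum>k\<in>?H. (1 + (real_of_int k)^2) powr \<sigma> * (cmod (cf k - m k * cg k))^2)"
    by (simp add: sobolev_norm_trigpoly)
  have F: "0 \<le> F" and G: "0 \<le> G"
    using f_le[of 0] g_le[of 0] norm_ge_zero order_trans by blast+
  have cf_sum: "(\<Sum>k\<in>?H. (cmod (cf k))^2) \<le> 2 * pi * F^2"
    using f_le unfolding cf by (intro parseval_trigpoly_le) simp_all
  have cg_sum: "(\<Sum>k\<in>?H. (cmod (cg k))^2) \<le> 2 * pi * G^2"
  proof (rule parseval_trigpoly_le)
    fix x
    show "cmod (\<Sum>k\<in>?H. cg k * phi k x) \<le> G"
      using g_le[of x] fun_cong[OF cg, of x] by simp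
  qed simp
  have "(\<Sum>k\<in>?H. (1 + (real_of_int k)^2) powr \<sigma> * (cmod (cf k - m k * cg k))^2)
      \<le> 2 * W * ((\<Sum>k\<in>?H. (cmod (cf k))^2) + (1 / real n)^2 * (\<Sum>k\<in>?H. (cmod (cg k))^2))"
  proof (rule sum_weighted_norm_diff_le)
    fix k assume k: "k \<in> ?H"
    show "(1 + (real_of_int k)^2) powr \<sigma> \<le> W"
      unfolding W_def using k n \<sigma> by (rule harmonic_weight_le)
    show "cmod (m k) \<le> 1 / real n"
      using k n unfolding m_def harmonics_def by (intro dx_Lambda_m2_symbol_le) auto
  qed (simp add: W_def)
  also have "\<dots> \<le> 2 * W * (2 * pi * F^2 + (1 / real n)^2 * (2 * pi * G^2))"
    unfolding W_def using cf_sum cg_sum by (intro mult_left_mono add_mono) auto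
  also have "\<dots> = 4 * pi * W * (F^2 + (G / real n)^2)"
    by (simp add: power_divide algebra_simps)
  also have "\<dots> \<le> 4 * pi * W * (F + G / real n)^2"
    using F G by (intro mult_left_mono) (auto simp: power2_sum W_def)
  also have "\<dots> = (sqrt (4 * pi * (1 + (real d)^2)) * real n powr \<sigma> * (F + G / real n))^2"
    by (simp add: W_def power_mult_distrib)
  finally show ?thesis
    unfolding norm_eq using F G by (simp add: real_le_lsqrt)
qed

lemma deriv_uapp_t:
  "deriv (\<lambda>\<tau>. uapp s \<omega> n \<tau> x) t = real n powr (-s) * \<omega> * sin (real n * x + \<omega> * t) / 14"
  unfolding uapp_def
  by (rule DERIV_imp_deriv) (auto intro!: derivative_eq_intros simp: algebra_simps)

lemma deriv_uapp_x:
  "deriv (\<lambda>y. uapp s \<omega> n t y) x = real n powr (-s) * real n * sin (real n * x + \<omega> * t) / 14"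
  unfolding uapp_def
  by (rule DERIV_imp_deriv) (auto intro!: derivative_eq_intros simp: algebra_simps)

lemma uapp_residual:
  assumes "n \<ge> 1"
  shows "deriv (\<lambda>\<tau>. uapp s \<omega> n \<tau> x) t - deriv (\<lambda>y. uapp s \<omega> n t y) x
           - 14 * uapp s \<omega> n t x * deriv (\<lambda>y. uapp s \<omega> n t y) x
         = (real n powr (-s))^2 * real n / 14 * sin (real n * x + \<omega> * t) * cos (real n * x + \<omega> * t)"
  unfolding deriv_uapp_t deriv_uapp_x unfolding uapp_def
  using assms by (simp add: field_simps power2_eq_square)

definition R_poly :: "real \<Rightarrow> real" where
  "R_poly u = - 3 * u^4 + 2 * u^3 - 10 * u^2 - 2 * u"

lemma Rnl_uapp:
  "Rnl (uapp s \<omega> n t) y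
     = 7 * (real n powr (-s) * real n * sin (real n * y + \<omega> * t) / 14)^2 + R_poly (uapp s \<omega> n t y)"
  unfolding Rnl_def R_poly_def deriv_uapp_x by simp

lemma R_poly_lipschitz:
  assumes u: "\<bar>u\<bar> \<le> 1" and v: "\<bar>v\<bar> \<le> 1"
  shows "\<bar>R_poly u - R_poly v\<bar> \<le> 40 * \<bar>u - v\<bar>"
proof -
  define Q where "Q = - 3 * (u^3 + u^2 * v + u * v^2 + v^3) + 2 * (u^2 + u * v + v^2) - 10 * (u + v) - 2"
  have "R_poly u - R_poly v = (u - v) * Q"
    unfolding Q_def R_poly_def by algebra
  moreover have "\<bar>u\<bar> ^ k \<le> 1" "\<bar>v\<bar> ^ k \<le> 1" for k
    using u v by (auto intro: power_le_one)
  then have "\<bar>u^3\<bar> \<le> 1" "\<bar>v^3\<bar> \<le> 1" "\<bar>u^2\<bar> \<le> 1" "\<bar>v^2\<bar> \<le> 1"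
    "\<bar>u^2 * v\<bar> \<le> 1" "\<bar>u * v^2\<bar> \<le> 1" "\<bar>u * v\<bar> \<le> 1"
    using u v by (simp_all only: power_abs abs_mult) (auto intro!: mult_le_one simp: abs_square_le_1)
  then have "\<bar>Q\<bar> \<le> 40"
    unfolding Q_def using u v
    by (simp add: abs_le_iff) (use zero_le_power2[of u] zero_le_power2[of v] in linarith)
  ultimately show ?thesis
    using mult_right_mono[of "\<bar>Q\<bar>" 40 "\<bar>u - v\<bar>"] by (simp add: abs_mult mult.commute)
qed

lemma Rnl_uapp_deviation_le:
  assumes n: "n \<ge> 1" and \<omega>: "\<omega> \<in> {-1, 1}" and s: "0 \<le> s"
  shows "\<bar>Rnl (uapp s \<omega> n t) y - R_poly ((\<omega> / real n - 1) / 14)\<bar>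
           \<le> (real n powr (-s))^2 * (real n)^2 / 28 + 40 * (real n powr (-s) / 14)"
proof -
  define b where "b = real n powr (-s)"
  define \<theta> where "\<theta> = real n * y + \<omega> * t"
  define a where "a = \<omega> / real n - 1"
  have b: "0 < b" "b \<le> 1"
    unfolding b_def using n s powr_mono[of "-s" 0 "real n"] by auto
  have "\<bar>\<omega> / real n\<bar> \<le> 1" using \<omega> n by auto
  then have a: "\<bar>a\<bar> \<le> 2" unfolding a_def by linarith
  have bc: "\<bar>b * cos \<theta>\<bar> \<le> b"
    using b abs_cos_le_one[of \<theta>] by (simp add: abs_mult mult_left_le)
  have "\<bar>R_poly ((a - b * cos \<theta>) / 14) - R_poly (a / 14)\<bar> \<le> 40 * \<bar>(a - b * cos \<theta>) / 14 - a / 14\<bar>"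
    using a b bc by (intro R_poly_lipschitz) auto
  also have "\<dots> \<le> 40 * (b / 14)"
    using bc by (simp add: field_simps abs_minus_commute)
  finally have lip: "\<bar>R_poly ((a - b * cos \<theta>) / 14) - R_poly (a / 14)\<bar> \<le> 40 * (b / 14)" .
  have "7 * (b * real n * sin \<theta> / 14)^2 = b^2 * (real n)^2 / 28 * (sin \<theta>)^2"
    by (simp add: power_mult_distrib power_divide)
  also have "\<dots> \<le> b^2 * (real n)^2 / 28"
    by (intro mult_left_le) (simp_all add: abs_square_le_1)
  finally have sq: "7 * (b * real n * sin \<theta> / 14)^2 \<le> b^2 * (real n)^2 / 28" .
  have u: "uapp s \<omega> n t y = (a - b * cos \<theta>) / 14"
    unfolding uapp_def a_def b_def \<theta>_def by simp
  have "\<bar>Rnl (uapp s \<omega> n t) y - R_poly (a / 14)\<bar> \<le> b^2 * (real n)^2 / 28 + 40 * (b / 14)"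
    unfolding Rnl_uapp u unfolding b_def[symmetric] \<theta>_def[symmetric] add_diff_eq[symmetric]
    by (rule order_trans[OF abs_triangle_ineq add_mono]) (use sq lip in simp_all)
  then show ?thesis unfolding a_def b_def .
qed

lemma harmonic_poly_uapp: "harmonic_poly n 1 (\<lambda>y. complex_of_real (uapp s \<omega> n t y))"
proof -
  have "harmonic_poly n 1 (\<lambda>y. complex_of_real ((\<omega> / real n - 1) / 14)
      + complex_of_real (- (real n powr (-s)) / 14) * complex_of_real (cos (real n * y + \<omega> * t)))"
    by (intro harmonic_poly_add harmonic_poly_const harmonic_poly_scale harmonic_poly_cos)
  moreover have "uapp s \<omega> n t y
      = (\<omega> / real n - 1) / 14 + (- (real n powr (-s)) / 14) * cos (real n * y + \<omega> * t)" for y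
    unfolding uapp_def by (simp add: field_simps)
  ultimately show ?thesis by simp
qed

lemma harmonic_poly_Rnl_uapp: "harmonic_poly n 4 (\<lambda>y. complex_of_real (Rnl (uapp s \<omega> n t) y))"
proof -
  define U where "U y = complex_of_real (uapp s \<omega> n t y)" for y
  define S where "S y = complex_of_real (sin (real n * y + \<omega> * t))" for y
  have U: "harmonic_poly n 1 U" and S: "harmonic_poly n 1 S"
    unfolding U_def S_def by (rule harmonic_poly_uapp, rule harmonic_poly_sin)
  have S2: "harmonic_poly n 4 (\<lambda>y. S y * S y)"
    by (rule harmonic_poly_mono[OF _ harmonic_poly_mult[OF S S]]) simp
  have Um: "harmonic_poly n 4 (\<lambda>y. U y ^ m)" if "m \<le> 4" for m
    using harmonic_poly_mono[OF _ harmonic_poly_power[OF U, of m]] that by simp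
  have "harmonic_poly n 4 (\<lambda>y. complex_of_real (7 * (real n powr (-s) * real n / 14)^2) * (S y * S y)
      + (-3) * U y ^ 4 + 2 * U y ^ 3 + (-10) * U y ^ 2 + (-2) * U y ^ 1)"
    by (intro harmonic_poly_add harmonic_poly_scale S2 Um) simp_all
  moreover have "complex_of_real (Rnl (uapp s \<omega> n t) y)
      = complex_of_real (7 * (real n powr (-s) * real n / 14)^2) * (S y * S y)
        + (-3) * U y ^ 4 + 2 * U y ^ 3 + (-10) * U y ^ 2 + (-2) * U y ^ 1" for y
    unfolding Rnl_uapp R_poly_def U_def S_def by (simp add: power_mult_distrib power2_eq_square)
  ultimately show ?thesis by simp
qed

lemma harmonic_poly_uapp_residual:
  "harmonic_poly n 4 (\<lambda>y. complex_of_real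
     ((real n powr (-s))^2 * real n / 14 * sin (real n * y + \<omega> * t) * cos (real n * y + \<omega> * t)))"
proof -
  have "harmonic_poly n 4 (\<lambda>y. complex_of_real ((real n powr (-s))^2 * real n / 14)
      * (complex_of_real (sin (real n * y + \<omega> * t)) * complex_of_real (cos (real n * y + \<omega> * t))))"
    by (rule harmonic_poly_mono[of "1 + 1"])
       (simp, intro harmonic_poly_scale harmonic_poly_mult harmonic_poly_sin harmonic_poly_cos)
  then show ?thesis by (simp add: mult.assoc)
qed

lemma abs_mult_sin_cos_le:
  fixes c x y :: real
  assumes "0 \<le> c"
  shows "\<bar>c * sin x * cos y\<bar> \<le> c"
proof -
  have "\<bar>sin x\<bar> * \<bar>cos y\<bar> \<le> 1"
    by (intro mult_le_one abs_sin_le_one abs_cos_le_one) simp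
  then show ?thesis
    using assms by (simp add: abs_mult mult.assoc mult_left_le)
qed

lemma sobolev_norm_Err_le:
  assumes n: "n \<ge> 1" and \<omega>: "\<omega> \<in> {-1, 1}" and s: "0 \<le> s" and \<sigma>: "0 \<le> \<sigma>" "\<sigma> \<le> 1"
  shows "sobolev_norm \<sigma> (Err s \<omega> n t)
           \<le> 45 * real n powr \<sigma> * (real n powr (1 - 2 * s) + real n powr (- s - 1))"
proof -
  define b where "b = real n powr (-s)"
  have b: "0 < b" "b \<le> 1" and np: "1 \<le> real n"
    unfolding b_def using n s powr_mono[of "-s" 0 "real n"] by auto
  have Err_eq: "Err s \<omega> n t = (\<lambda>x. complex_of_real
      (b^2 * real n / 14 * sin (real n * x + \<omega> * t) * cos (real n * x + \<omega> * t))
      - dx_Lambda_m2 (\<lambda>y. complex_of_real (Rnl (uapp s \<omega> n t) y)) x)"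
    unfolding Err_def uapp_residual[OF n] b_def by simp
  have "sobolev_norm \<sigma> (Err s \<omega> n t) \<le> sqrt (4 * pi * (1 + (real 4)^2)) * real n powr \<sigma>
      * (b^2 * real n / 14 + (b^2 * (real n)^2 / 28 + 40 * (b / 14)) / real n)"
    unfolding Err_eq
  proof (rule sobolev_norm_diff_dx_Lambda_m2_le[OF n \<sigma>])
    fix x
    show "cmod (complex_of_real (b^2 * real n / 14 * sin (real n * x + \<omega> * t)
        * cos (real n * x + \<omega> * t))) \<le> b^2 * real n / 14"
      unfolding norm_of_real by (rule abs_mult_sin_cos_le) simp
    show "cmod (complex_of_real (Rnl (uapp s \<omega> n t) x) - complex_of_real (R_poly ((\<omega> / real n - 1) / 14)))
        \<le> b^2 * (real n)^2 / 28 + 40 * (b / 14)"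
      unfolding b_def using Rnl_uapp_deviation_le[OF n \<omega> s] by (simp flip: of_real_diff)
  qed (use harmonic_poly_uapp_residual harmonic_poly_Rnl_uapp in \<open>simp_all add: b_def\<close>)
  also have "\<dots> \<le> 15 * real n powr \<sigma> * (3 * (b^2 * real n + b / real n))"
  proof (intro mult_mono)
    show "sqrt (4 * pi * (1 + (real 4)^2)) \<le> 15"
      using pi_approx(2) by (simp add: real_sqrt_le_iff real_le_lsqrt)
    show "b^2 * real n / 14 + (b^2 * (real n)^2 / 28 + 40 * (b / 14)) / real n
        \<le> 3 * (b^2 * real n + b / real n)"
      using b np by (simp add: field_simps power2_eq_square)
  qed (use b np in auto)
  also have "b^2 * real n = real n powr (-s) * real n powr (-s) * real n powr 1"
    unfolding b_def using np by (simp add: power2_eq_square)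
  also have "\<dots> = real n powr (1 - 2 * s)"
    unfolding powr_add[symmetric] by (simp add: algebra_simps)
  also have "b / real n = real n powr (- s - 1)"
    unfolding b_def using np by (simp add: powr_diff)
  finally show ?thesis by (simp add: algebra_simps)
qed

lemma powr_add_le_max:
  fixes x :: real
  assumes "1 \<le> x"
  shows "x powr a + x powr b \<le> 2 * x powr max a b"
  using powr_mono[OF max.cobounded1 assms, of a b] powr_mono[OF max.cobounded2 assms, of b a] by simp

theorem lemma3p1:
  fixes s :: real
  assumes "s > 3/2"
  shows "\<exists>C>0. \<forall>\<sigma>::real. \<forall>\<omega>::real. \<forall>n::nat. \<forall>t::real.
           1/2 < \<sigma> \<and> \<sigma> \<le> 1 \<and> \<omega> \<in> {-1, 1} \<and> n \<ge> 1 \<longrightarrow>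
           sobolev_norm \<sigma> (Err s \<omega> n t) \<le>
             (if s < 2 then C * real n powr (1 + \<sigma> - 2 * s)
                       else C * real n powr (\<sigma> - s - 1))"
proof (intro exI[of _ 90] conjI allI impI)
  fix \<sigma> \<omega> :: real and n :: nat and t :: real
  assume "1/2 < \<sigma> \<and> \<sigma> \<le> 1 \<and> \<omega> \<in> {-1, 1} \<and> n \<ge> 1"
  then have n: "n \<ge> 1" and \<omega>: "\<omega> \<in> {-1, 1}" and \<sigma>: "0 \<le> \<sigma>" "\<sigma> \<le> 1" by auto
  define e where "e = max (1 - 2 * s) (- s - 1)"
  have "sobolev_norm \<sigma> (Err s \<omega> n t)
      \<le> 45 * real n powr \<sigma> * (real n powr (1 - 2 * s) + real n powr (- s - 1))"
    using assms by (intro sobolev_norm_Err_le[OF n \<omega> _ \<sigma>]) simp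
  also have "\<dots> \<le> 45 * real n powr \<sigma> * (2 * real n powr e)"
    unfolding e_def using n by (intro mult_left_mono powr_add_le_max) auto
  also have "\<dots> = 90 * real n powr (\<sigma> + e)"
    by (simp add: powr_add)
  also have "\<sigma> + e = (if s < 2 then 1 + \<sigma> - 2 * s else \<sigma> - s - 1)"
    unfolding e_def by auto
  finally show "sobolev_norm \<sigma> (Err s \<omega> n t)
      \<le> (if s < 2 then 90 * real n powr (1 + \<sigma> - 2 * s) else 90 * real n powr (\<sigma> - s - 1))"
    by (simp add: if_distrib)
qed simp

end
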